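(* Let $\Gamma$ and the data $s_0,\eta_0,\Xi$ be as in the context. There exists a constant $c>0$ such that for all sufficiently large $X>0$ and every closed ball $B\subset\mathbb R^{n-1}$ of radius $c/\sqrt X$, there is at least one cusp $\gamma\xi\infty$ of $\Gamma$ ($\gamma\in\Gamma$, $\xi\in\Xi$, $\gamma\xi\notin P$) with $\gamma\xi\infty\in B$ and $h(\gamma\xi\infty)\le X$.
   Context: $n\ge2$, $G=\mathrm{SO}(n,1)$, $K\cong\mathrm{SO}(n)$ maximal compact. $A=\{a(t)\}$ a one-parameter $\mathbb R$-split torus with $\mathfrak g=\mathfrak g_{-1}\oplus\mathfrak z(A)\oplus\mathfrak g_{+1}$, $\mathrm{Ad}(a(t))=e^{\pm t}$ on $\mathfrak g_{\pm1}$; $M=Z_G(A)\cap K$, $N=\exp\mathfrak g_{+1}$, $\mathfrak g_{+1}\cong\mathbb R^{n-1}$ with $\mathrm{Ad}(M)$-invariant Euclidean norm, $u(\mathbf x)=\exp\mathbf x$; $\sigma\in K$ with $\sigma^2=e$, $\sigma a(t)\sigma^{-1}=a(-t)$; $P=MAN$. Each $g\in G\setminus P$ is $g=u(\mathbf x)\sigma ma(r)u(\mathbf y)$ with $\mathbf x,r$ unique; $\partial\mathbb H^n\cong\mathbb R^{n-1}\cup\{\infty\}$ via $u(\mathbf x)\sigma P\mapsto\mathbf x$, $P\mapsto\infty$. $\Omega(\eta,s)=\eta\{a(t):t\ge s\}K$. $\Gamma$ discrete, $\Gamma\backslash G$ of finite volume, $\Gamma\backslash\mathbb H^n$ non-compact,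 with fixed $s_0>0$, compact $\eta_0\subset N$, finite $\Xi\ni e$ satisfying: (i) $G=\Gamma\Xi\Omega(\eta_0,s_0)$; (ii) $\Gamma\cap\xi N\xi^{-1}$ cocompact in $\xi N\xi^{-1}$; (iii) for compact $\eta$, $\{\gamma:\gamma\Xi\Omega(\eta,s_0)\cap\Omega(\eta,s_0)\ne\emptyset\}$ finite; (iv) for compact $\eta\supseteq\eta_0$ some $s_1>s_0$ with $\gamma\xi_1\Omega(\eta,s_0)\cap\xi_2\Omega(\eta,s_1)\ne\emptyset\Rightarrow\xi_1=\xi_2,\gamma\in\xi_1NM\xi_1^{-1}$. Height: for $\gamma\xi=u(\mathbf x_1)\sigma ma(r)u(\mathbf y)$, $\gamma\xi\infty=\mathbf x_1$ and $h(\gamma\xi\infty)=e^r$. *)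

theory Defs
  imports "HOL-Analysis.Analysis"
begin

text \<open>Index set for the Lorentzian space R^{n+1} in light-cone coordinates:
  Lo, Mid i (i ranging over a finite type 'd of cardinality n-1), Hi.
  The quadratic form is Q(v) = sum_i v(Mid i)^2 - 2 v(Lo) v(Hi), of signature (n,1).\<close>

datatype 'd lidx = Lo | Mid 'd | Hi

lemma UNIV_lidx: "(UNIV :: 'd lidx set) = insert Lo (insert Hi (range Mid))"
  by (auto intro: lidx.exhaust)

instance lidx :: (finite) finite
  by standard (simp add: UNIV_lidx)

type_synonym 'd mat = "real^'d lidx^'d lidx"

definition Jform :: "('d::finite) mat" where
  "Jform = (\<chi> i j. case (i, j) of
      (Mid a, Mid b) \<Rightarrow> (if a = b then 1 else 0)
    | (Lo, Hi) \<Rightarrow> -1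
    | (Hi, Lo) \<Rightarrow> -1
    | _ \<Rightarrow> 0)"

definition basept :: "real^('d::finite) lidx" where
  "basept = (\<chi> i. case i of Mid _ \<Rightarrow> 0 | _ \<Rightarrow> 1)"

text \<open>G = SO(n,1) (identity component: det 1 and time-orientation preserving).\<close>
definition SOn1 :: "('d::finite) mat set" where
  "SOn1 = {g. transpose g ** Jform ** g = Jform \<and> det g = 1 \<and> (g *v basept) $ Lo > 0}"

definition Kgrp :: "('d::finite) mat set" where
  "Kgrp = {g \<in> SOn1. g *v basept = basept}"

text \<open>The R-split torus a(t); Ad(a(t)) = e^{t} on g_{+1}.\<close>
definition aa :: "real \<Rightarrow> ('d::finite) mat" where
  "aa t = (\<chi> i j. if i = j then (case i of Lo \<Rightarrow> exp t | Mid _ \<Rightarrow> 1 | Hi \<Rightarrow> exp (- t)) else 0)"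

text \<open>u(x) = exp x for x in g_{+1} = R^{n-1} (explicitly I + X + X^2/2, X nilpotent).\<close>
definition uu :: "real^('d::finite) \<Rightarrow> 'd mat" where
  "uu x = (\<chi> i j. case (i, j) of
      (Lo, Lo) \<Rightarrow> 1
    | (Lo, Mid b) \<Rightarrow> x $ b
    | (Lo, Hi) \<Rightarrow> (norm x)^2 / 2
    | (Mid a, Mid b) \<Rightarrow> (if a = b then 1 else 0)
    | (Mid a, Hi) \<Rightarrow> x $ a
    | (Hi, Hi) \<Rightarrow> 1
    | _ \<Rightarrow> 0)"

definition Ngrp :: "('d::finite) mat set" where
  "Ngrp = range uu"

definition Mgrp :: "('d::finite) mat set" where
  "Mgrp = {g \<in> Kgrp. \<forall>t. g ** aa t = aa t ** g}"

definition Pgrp :: "('d::finite) mat set" where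
  "Pgrp = {m ** aa t ** uu x | m t x. m \<in> Mgrp}"

definition lmul :: "('d::finite) mat \<Rightarrow> 'd mat set \<Rightarrow> 'd mat set" where
  "lmul g S = (\<lambda>h. g ** h) ` S"

definition conjset :: "('d::finite) mat \<Rightarrow> 'd mat set \<Rightarrow> 'd mat set" where
  "conjset g S = (\<lambda>h. g ** h ** matrix_inv g) ` S"

definition Omega :: "('d::finite) mat set \<Rightarrow> real \<Rightarrow> 'd mat set" where
  "Omega eta s = {n ** aa t ** k | n t k. n \<in> eta \<and> s \<le> t \<and> k \<in> Kgrp}"

definition weyl_elt :: "('d::finite) mat \<Rightarrow> bool" where
  "weyl_elt \<sigma> \<longleftrightarrow> \<sigma> \<in> Kgrp \<and> \<sigma> ** \<sigma> = mat 1 \<and> (\<forall>t. \<sigma> ** aa t ** matrix_inv \<sigma> = aa (- t))"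

text \<open>g = u(x) sigma m a(r) u(y); then g infinity = x and h(g infinity) = exp r.\<close>
definition bruhat :: "('d::finite) mat \<Rightarrow> 'd mat \<Rightarrow> real^'d \<Rightarrow> real \<Rightarrow> bool" where
  "bruhat \<sigma> g x r \<longleftrightarrow> (\<exists>m \<in> Mgrp. \<exists>y. g = uu x ** \<sigma> ** m ** aa r ** uu y)"

definition is_subgroup :: "('d::finite) mat set \<Rightarrow> bool" where
  "is_subgroup \<Gamma> \<longleftrightarrow> \<Gamma> \<subseteq> SOn1 \<and> mat 1 \<in> \<Gamma> \<and> (\<forall>g\<in>\<Gamma>. \<forall>h\<in>\<Gamma>. g ** h \<in> \<Gamma>)
     \<and> (\<forall>g\<in>\<Gamma>. matrix_inv g \<in> \<Gamma>)"

definition discrete_set :: "('d::finite) mat set \<Rightarrow> bool" where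
  "discrete_set \<Gamma> \<longleftrightarrow> (\<forall>g\<in>\<Gamma>. \<exists>e>0. \<forall>h\<in>\<Gamma>. dist h g < e \<longrightarrow> h = g)"

definition haar :: "('d::finite) mat measure \<Rightarrow> bool" where
  "haar \<mu> \<longleftrightarrow> space \<mu> = SOn1 \<and> sets \<mu> = sets (restrict_space borel SOn1)
     \<and> (\<forall>g\<in>SOn1. \<forall>A\<in>sets \<mu>. emeasure \<mu> (lmul g A) = emeasure \<mu> A)
     \<and> (\<forall>C. compact C \<and> C \<subseteq> SOn1 \<longrightarrow> emeasure \<mu> C < \<infinity>)
     \<and> emeasure \<mu> SOn1 > 0"

definition finite_covolume :: "('d::finite) mat set \<Rightarrow> bool" where
  "finite_covolume \<Gamma> \<longleftrightarrow> (\<exists>\<mu>. haar \<mu> \<and>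
     (\<exists>F\<in>sets \<mu>. (\<Union>\<gamma>\<in>\<Gamma>. lmul \<gamma> F) = SOn1 \<and> emeasure \<mu> F < \<infinity>))"

text \<open>Gamma\G (equivalently Gamma\H^n, as K is compact) is not compact.\<close>
definition noncocompact :: "('d::finite) mat set \<Rightarrow> bool" where
  "noncocompact \<Gamma> \<longleftrightarrow> \<not> (\<exists>C. compact C \<and> C \<subseteq> SOn1 \<and> SOn1 \<subseteq> (\<Union>\<gamma>\<in>\<Gamma>. lmul \<gamma> C))"

end

theory Submission
  imports Defs
begin

text \<open>In light-cone coordinates a boundary point \<open>x\<close> is the null ray of \<open>u(x) e_hi\<close>, and a cusp
  \<open>\<gamma>\<xi>\<infinity>\<close> with Bruhat coordinates \<open>(x, r)\<close> is characterised by \<open>\<gamma>\<xi> e_lo = e\<^sup>r u(x) e_hi\<close>.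
  Given a centre \<open>p\<close> and \<open>X \<ge> 1\<close>, write \<open>g = u(p) \<sigma> a(\<tau>)\<close>, \<open>e\<^sup>\<tau> = X e\<^sup>s\<^sup>0\<close>, as \<open>\<gamma>\<xi> n a(s) k\<close> using
  the Siegel covering. The null vector \<open>f = k\<^sup>-\<^sup>1 e_lo\<close> satisfies \<open>f_lo + f_hi = 1\<close>, and
  \<open>\<gamma>\<xi> e_lo = e\<^sup>-\<^sup>s g f\<close>. If \<open>f_lo = 0\<close>, then \<open>\<gamma>\<xi>\<close> fixes \<open>\<infinity>\<close> and dilates, which the separation
  property (iv) of Siegel sets forbids. Otherwise \<open>\<gamma>\<xi>\<infinity>\<close> is a cusp of height \<open>e\<^sup>\<tau>\<^sup>-\<^sup>s f_lo \<le> X\<close>.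
  Separation also bounds every cusp height below by \<open>e\<^sup>-\<^sup>s\<^sup>0\<^sup>-\<^sup>s\<^sup>1\<close>, and
  \<open>|\<gamma>\<xi>\<infinity> - p|\<^sup>2 = 2 e\<^sup>-\<^sup>\<tau>\<^sup>-\<^sup>s f_hi / height \<le> 2 e\<^sup>s\<^sup>1\<^sup>-\<^sup>s\<^sup>0 / X\<close>.\<close>

section \<open>Light-cone coordinates\<close>

lemma sum_UNIV_lidx:
  "(\<Sum>i\<in>UNIV. f i) = f Lo + f Hi + (\<Sum>b\<in>UNIV. f (Mid b))"
  for f :: "('d::finite) lidx \<Rightarrow> 'a::comm_monoid_add"
proof -
  have "inj Mid" by (auto intro: injI)
  have "(\<Sum>i\<in>UNIV. f i) = f Lo + f Hi + (\<Sum>i\<in>range Mid. f i)"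
    by (simp add: UNIV_lidx add.assoc image_iff)
  also have "(\<Sum>i\<in>range Mid. f i) = (\<Sum>b\<in>UNIV. f (Mid b))"
    using sum.reindex[OF \<open>inj Mid\<close>, of f] by (simp add: o_def)
  finally show ?thesis .
qed

lemma prod_UNIV_lidx:
  "(\<Prod>i\<in>UNIV. f i) = f Lo * f Hi * (\<Prod>b\<in>UNIV. f (Mid b))"
  for f :: "('d::finite) lidx \<Rightarrow> 'a::comm_monoid_mult"
proof -
  have "inj Mid" by (auto intro: injI)
  have "(\<Prod>i\<in>UNIV. f i) = f Lo * f Hi * (\<Prod>i\<in>range Mid. f i)"
    by (simp add: UNIV_lidx mult.assoc image_iff)
  also have "(\<Prod>i\<in>range Mid. f i) = (\<Prod>b\<in>UNIV. f (Mid b))"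
    using prod.reindex[OF \<open>inj Mid\<close>, of f] by (simp add: o_def)
  finally show ?thesis .
qed

lemma lidx_vec_eqI:
  fixes v w :: "'a^('d::finite) lidx"
  assumes "v$Lo = w$Lo" "v$Hi = w$Hi" "\<And>b. v$Mid b = w$Mid b"
  shows "v = w"
  using assms by (simp add: vec_eq_iff) (metis lidx.exhaust)

lemma lidx_mat_eqI:
  fixes A B :: "('d::finite) mat"
  assumes "A$Lo$Lo = B$Lo$Lo" "\<And>b. A$Lo$Mid b = B$Lo$Mid b" "A$Lo$Hi = B$Lo$Hi"
    "\<And>a. A$Mid a$Lo = B$Mid a$Lo" "\<And>a b. A$Mid a$Mid b = B$Mid a$Mid b" "\<And>a. A$Mid a$Hi = B$Mid a$Hi"
    "A$Hi$Lo = B$Hi$Lo" "\<And>b. A$Hi$Mid b = B$Hi$Mid b" "A$Hi$Hi = B$Hi$Hi"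
  shows "A = B"
proof -
  have "A$i$j = B$i$j" for i j using assms by (cases i; cases j) auto
  then show ?thesis by (simp add: vec_eq_iff)
qed

lemma matrix_mult_entry: "(A ** B) $ i $ j = (\<Sum>k\<in>UNIV. A$i$k * B$k$j)"
  by (simp add: matrix_matrix_mult_def)

lemma matrix_vector_mult_entry: "(A *v v) $ i = (\<Sum>k\<in>UNIV. A$i$k * v$k)"
  by (simp add: matrix_vector_mult_def)

lemma sum_delta_mult [simp]:
  fixes f :: "'d::finite \<Rightarrow> real"
  shows "(\<Sum>c\<in>UNIV. (if a = c then 1 else 0) * f c) = f a"
    "(\<Sum>c\<in>UNIV. (if c = a then 1 else 0) * f c) = f a"
    "(\<Sum>c\<in>UNIV. f c * (if a = c then 1 else 0)) = f a"
    "(\<Sum>c\<in>UNIV. f c * (if c = a then 1 else 0)) = f a"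
  by (simp_all add: if_distrib if_distribR cong: if_cong)

lemma Jform_entries [simp]:
  "Jform $ Lo $ Lo = 0" "Jform $ Lo $ Hi = -1" "Jform $ Hi $ Lo = -1" "Jform $ Hi $ Hi = 0"
  "Jform $ Lo $ Mid a = 0" "Jform $ Hi $ Mid a = 0" "Jform $ Mid a $ Lo = 0" "Jform $ Mid a $ Hi = 0"
  "Jform $ Mid a $ Mid b = (if a = b then 1 else 0)"
  by (simp_all add: Jform_def)

lemma uu_entries [simp]:
  "uu x $ Lo $ Lo = 1" "uu x $ Lo $ Mid b = x $ b" "uu x $ Lo $ Hi = (norm x)^2/2"
  "uu x $ Mid a $ Lo = 0" "uu x $ Mid a $ Mid b = (if a = b then 1 else 0)" "uu x $ Mid a $ Hi = x $ a"
  "uu x $ Hi $ Lo = 0" "uu x $ Hi $ Mid b = 0" "uu x $ Hi $ Hi = 1"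
  by (simp_all add: uu_def)

lemma aa_entries [simp]:
  "aa t $ Lo $ Lo = exp t" "aa t $ Lo $ Mid b = 0" "aa t $ Lo $ Hi = 0"
  "aa t $ Mid a $ Lo = 0" "aa t $ Mid a $ Mid b = (if a = b then 1 else 0)" "aa t $ Mid a $ Hi = 0"
  "aa t $ Hi $ Lo = 0" "aa t $ Hi $ Mid b = 0" "aa t $ Hi $ Hi = exp (-t)"
  by (simp_all add: aa_def)

lemma mat_1_entries [simp]:
  "(mat 1::'d::finite mat) $ Lo $ Lo = 1" "(mat 1::'d mat) $ Lo $ Mid b = 0"
  "(mat 1::'d mat) $ Lo $ Hi = 0" "(mat 1::'d mat) $ Mid a $ Lo = 0"
  "(mat 1::'d mat) $ Mid a $ Mid b = (if a = b then 1 else 0)" "(mat 1::'d mat) $ Mid a $ Hi = 0"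
  "(mat 1::'d mat) $ Hi $ Lo = 0" "(mat 1::'d mat) $ Hi $ Mid b = 0" "(mat 1::'d mat) $ Hi $ Hi = 1"
  by (simp_all add: mat_def)

definition e_lo :: "real^('d::finite) lidx" where
  "e_lo = (\<chi> i. case i of Lo \<Rightarrow> 1 | _ \<Rightarrow> 0)"

definition e_hi :: "real^('d::finite) lidx" where
  "e_hi = (\<chi> i. case i of Hi \<Rightarrow> 1 | _ \<Rightarrow> 0)"

definition spatial :: "real^('d::finite) lidx \<Rightarrow> real^'d" where
  "spatial w = (\<chi> b. w $ Mid b)"

lemma vec_entries [simp]:
  "e_lo $ Lo = 1" "e_lo $ Hi = 0" "e_lo $ Mid b = 0"
  "e_hi $ Lo = 0" "e_hi $ Hi = 1" "e_hi $ Mid b = 0"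
  "basept $ Lo = 1" "basept $ Hi = 1" "basept $ Mid b = 0"
  "spatial w $ b = w $ Mid b"
  by (simp_all add: e_lo_def e_hi_def basept_def spatial_def)

lemma spatial_e [simp]: "spatial e_lo = 0" "spatial e_hi = 0" "spatial basept = 0"
  by (simp_all add: vec_eq_iff)

lemma basept_eq: "basept = e_lo + e_hi"
  by (rule lidx_vec_eqI) auto

lemma uu_mult_vec [simp]:
  "(uu x *v v) $ Lo = v$Lo + x \<bullet> spatial v + (norm x)^2/2 * v$Hi"
  "(uu x *v v) $ Mid b = v$Mid b + x$b * v$Hi"
  "(uu x *v v) $ Hi = v$Hi"
  by (simp_all add: matrix_vector_mult_entry sum_UNIV_lidx inner_vec_def)

lemma aa_mult_vec [simp]:
  "(aa t *v v) $ Lo = exp t * v$Lo"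
  "(aa t *v v) $ Mid b = v$Mid b"
  "(aa t *v v) $ Hi = exp (-t) * v$Hi"
  by (simp_all add: matrix_vector_mult_entry sum_UNIV_lidx)

lemma uu_e_lo [simp]: "uu x *v e_lo = e_lo"
  by (rule lidx_vec_eqI) simp_all

lemma aa_e_lo [simp]: "aa t *v e_lo = exp t *\<^sub>R e_lo"
  by (rule lidx_vec_eqI) simp_all

lemma aa_e_hi [simp]: "aa t *v e_hi = exp (-t) *\<^sub>R e_hi"
  by (rule lidx_vec_eqI) simp_all

lemma spatial_uu_mult_vec: "spatial (uu p *v y) = spatial y + y$Hi *\<^sub>R p"
  by (simp add: vec_eq_iff mult.commute)

definition boundary_vec :: "real^'d::finite \<Rightarrow> real^'d lidx" where
  "boundary_vec x = uu x *v e_hi"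

lemma boundary_vec_entries [simp]:
  "boundary_vec x $ Lo = (norm x)^2/2" "boundary_vec x $ Mid b = x $ b" "boundary_vec x $ Hi = 1"
  by (simp_all add: boundary_vec_def)

section \<open>The Lorentz form and the subgroups \<open>N\<close>, \<open>A\<close>\<close>

definition lorentz_inner :: "real^('d::finite) lidx \<Rightarrow> real^'d lidx \<Rightarrow> real" where
  "lorentz_inner v w = spatial v \<bullet> spatial w - v$Lo * w$Hi - v$Hi * w$Lo"

definition lorentzian :: "('d::finite) mat \<Rightarrow> bool" where
  "lorentzian g \<longleftrightarrow> transpose g ** Jform ** g = Jform"

lemma lorentz_inner_simps:
  "lorentz_inner w e_lo = - w$Hi" "lorentz_inner w e_hi = - w$Lo"
  "lorentz_inner w basept = - w$Hi - w$Lo"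
  "lorentz_inner w w = (norm (spatial w))^2 - 2 * w$Lo * w$Hi"
  by (simp_all add: lorentz_inner_def power2_norm_eq_inner)

lemma lorentz_inner_scaleR:
  "lorentz_inner (c *\<^sub>R v) w = c * lorentz_inner v w"
  "lorentz_inner v (c *\<^sub>R w) = c * lorentz_inner v w"
  by (simp_all add: lorentz_inner_def spatial_def algebra_simps inner_vec_def sum_distrib_left)

lemma inner_Jform: "v \<bullet> (Jform *v w) = lorentz_inner v w"
proof -
  have "Jform *v w = (\<chi> i. case i of Lo \<Rightarrow> - w$Hi | Hi \<Rightarrow> - w$Lo | Mid b \<Rightarrow> w$Mid b)"
    by (rule lidx_vec_eqI) (simp_all add: matrix_vector_mult_entry sum_UNIV_lidx)
  then show ?thesis by (simp add: lorentz_inner_def inner_vec_def sum_UNIV_lidx)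
qed

lemma lorentz_inner_matrix:
  assumes "lorentzian g"
  shows "lorentz_inner (g *v v) (g *v w) = lorentz_inner v w"
proof -
  have "lorentz_inner (g *v v) (g *v w) = (v v* transpose g) \<bullet> (Jform *v (g *v w))"
    by (simp add: inner_Jform)
  also have "\<dots> = v \<bullet> (transpose g *v (Jform *v (g *v w)))"
    by (rule dot_lmul_matrix)
  also have "\<dots> = v \<bullet> ((transpose g ** Jform ** g) *v w)"
    by (simp add: matrix_vector_mul_assoc matrix_mul_assoc)
  also have "\<dots> = lorentz_inner v w"
    using assms by (simp add: lorentzian_def inner_Jform)
  finally show ?thesis .
qed

lemma lorentzian_mult: "lorentzian a \<Longrightarrow> lorentzian b \<Longrightarrow> lorentzian (a ** b)"
  unfolding lorentzian_def by (metis matrix_mul_assoc matrix_transpose_mul)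

lemma lorentzian_mat_1: "lorentzian (mat 1)"
  by (simp add: lorentzian_def)

lemma Jform_mult_Jform: "Jform ** Jform = (mat 1 :: ('d::finite) mat)"
  by (rule lidx_mat_eqI) (simp_all add: matrix_mult_entry sum_UNIV_lidx)

lemma transpose_Jform: "transpose Jform = (Jform :: ('d::finite) mat)"
  by (rule lidx_mat_eqI) (simp_all add: transpose_def)

lemma matrix_inv_unique:
  fixes A B :: "'a::comm_ring_1^'n^'n"
  assumes "A ** B = mat 1" "B ** A = mat 1"
  shows "matrix_inv A = B"
proof -
  have "A ** matrix_inv A = mat 1 \<and> matrix_inv A ** A = mat 1"
    unfolding matrix_inv_def by (rule someI[of _ B]) (use assms in blast)
  then have "matrix_inv A = matrix_inv A ** (A ** B)" using assms by simp
  also have "\<dots> = B" using \<open>_ \<and> matrix_inv A ** A = mat 1\<close> by (simp add: matrix_mul_assoc)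
  finally show ?thesis .
qed

lemma lorentzian_inverse:
  assumes "lorentzian g"
  shows "g ** matrix_inv g = mat 1" "matrix_inv g ** g = mat 1" "lorentzian (matrix_inv g)"
proof -
  define h where "h = Jform ** transpose g ** Jform"
  have hg: "h ** g = mat 1"
    using assms unfolding lorentzian_def h_def by (metis Jform_mult_Jform matrix_mul_assoc)
  then have gh: "g ** h = mat 1" using matrix_left_right_inverse by blast
  have inv: "matrix_inv g = h" by (rule matrix_inv_unique[OF gh hg])
  show "g ** matrix_inv g = mat 1" "matrix_inv g ** g = mat 1" using gh hg inv by auto
  have "transpose h ** Jform ** h = Jform ** g ** (Jform ** Jform) ** h"
    by (simp add: h_def matrix_transpose_mul transpose_Jform matrix_mul_assoc)
  also have "\<dots> = Jform ** (g ** h)"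
    by (simp add: Jform_mult_Jform matrix_mul_assoc)
  finally show "lorentzian (matrix_inv g)" by (simp add: lorentzian_def inv gh)
qed

lemma SOn1_iff: "g \<in> SOn1 \<longleftrightarrow> lorentzian g \<and> det g = 1 \<and> 0 < (g *v basept) $ Lo"
  by (simp add: SOn1_def lorentzian_def)

lemma Kgrp_iff: "k \<in> Kgrp \<longleftrightarrow> lorentzian k \<and> det k = 1 \<and> k *v basept = basept"
  by (auto simp: Kgrp_def SOn1_iff)

lemma mat_1_Kgrp: "mat 1 \<in> Kgrp"
  by (simp add: Kgrp_iff lorentzian_mat_1)

lemma sum_mult_eq_inner: "(\<Sum>b\<in>UNIV. x$b * y$b) = x \<bullet> (y :: real^'d::finite)"
  by (simp add: inner_vec_def)

lemma uu_mult: "uu x ** uu y = uu (x + y)"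
proof -
  have "(norm (x + y))^2 = (norm x)^2 + 2 * (x \<bullet> y) + (norm y)^2"
    by (simp add: power2_norm_eq_inner inner_add inner_commute)
  then show ?thesis
    by (intro lidx_mat_eqI) (simp_all add: matrix_mult_entry sum_UNIV_lidx sum_mult_eq_inner)
qed

lemma uu_0: "uu 0 = mat 1"
  by (rule lidx_mat_eqI) simp_all

lemma uu_inverse: "uu x ** uu (-x) = mat 1" "uu (-x) ** uu x = mat 1"
  by (simp_all add: uu_mult uu_0)

lemma aa_mult: "aa s ** aa t = aa (s + t)"
  by (rule lidx_mat_eqI) (simp_all add: matrix_mult_entry sum_UNIV_lidx mult_exp_exp)

lemma aa_0: "aa 0 = mat 1"
  by (rule lidx_mat_eqI) simp_all

lemma aa_inverse: "aa t ** aa (-t) = mat 1" "aa (-t) ** aa t = mat 1"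
  by (simp_all add: aa_mult aa_0)

lemma aa_uu_conj: "aa t ** uu x ** aa (-t) = uu (exp t *\<^sub>R x)"
  by (rule lidx_mat_eqI)
    (simp_all add: matrix_mult_entry sum_UNIV_lidx mult_exp_exp power_mult_distrib exp_double)

lemma lorentzian_aa: "lorentzian (aa t)"
  unfolding lorentzian_def
  by (rule lidx_mat_eqI) (simp_all add: matrix_mult_entry sum_UNIV_lidx transpose_def exp_minus)

lemma lorentzian_uu: "lorentzian (uu x)"
  unfolding lorentzian_def
  by (rule lidx_mat_eqI)
    (simp_all add: matrix_mult_entry sum_UNIV_lidx transpose_def sum_mult_eq_inner
      power2_norm_eq_inner[symmetric] power2_eq_square)

lemma det_aa: "det (aa t :: ('d::finite) mat) = 1"
  using det_diagonal[of "aa t :: 'd mat"] by (simp add: aa_def prod_UNIV_lidx exp_minus)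

text \<open>Conjugating by \<open>a(ln 2)\<close> gives \<open>det u(x) = det u(2x) = (det u(x))\<^sup>2\<close>.\<close>

lemma det_uu: "det (uu (x::real^('d::finite))) = 1"
proof -
  have "det (uu (2 *\<^sub>R x)) = det (uu x)^2"
    by (simp add: det_mul[symmetric] uu_mult power2_eq_square scaleR_2)
  moreover have "det (uu (2 *\<^sub>R x)) = det (uu x)"
    using arg_cong[OF aa_uu_conj[of "ln 2" x], of det] by (simp add: det_mul det_aa)
  moreover have "det (uu x) \<noteq> 0"
    using arg_cong[OF uu_inverse(1)[of x], of det] by (auto simp: det_mul)
  ultimately show ?thesis by (simp add: power2_eq_square)
qed

section \<open>The subgroup \<open>M\<close>, the Weyl element and Bruhat coordinates\<close>

lemma aa_eigenvector:
  assumes "t \<noteq> 0"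
  shows "aa t *v w = exp t *\<^sub>R w \<Longrightarrow> w = w$Lo *\<^sub>R e_lo"
    and "aa t *v w = exp (-t) *\<^sub>R w \<Longrightarrow> w = w$Hi *\<^sub>R e_hi"
proof -
  have ne: "exp t \<noteq> 1" "exp (-t) \<noteq> 1" "exp (-t) \<noteq> exp t" using assms by auto
  show "w = w$Lo *\<^sub>R e_lo" if e: "aa t *v w = exp t *\<^sub>R w"
  proof (rule lidx_vec_eqI)
    show "w$Hi = (w$Lo *\<^sub>R e_lo)$Hi" using arg_cong[OF e, of "\<lambda>v. v$Hi"] ne by simp
    show "w$Mid b = (w$Lo *\<^sub>R e_lo)$Mid b" for b using arg_cong[OF e, of "\<lambda>v. v$Mid b"] ne by simp
  qed simp
  show "w = w$Hi *\<^sub>R e_hi" if e: "aa t *v w = exp (-t) *\<^sub>R w"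
  proof (rule lidx_vec_eqI)
    show "w$Lo = (w$Hi *\<^sub>R e_hi)$Lo" using arg_cong[OF e, of "\<lambda>v. v$Lo"] ne by simp
    show "w$Mid b = (w$Hi *\<^sub>R e_hi)$Mid b" for b using arg_cong[OF e, of "\<lambda>v. v$Mid b"] ne by simp
  qed simp
qed

lemma eq_basept_coords:
  assumes "c *\<^sub>R e_lo + d *\<^sub>R e_hi = basept"
  shows "c = 1" "d = 1"
  using arg_cong[OF assms, of "\<lambda>v. v$Lo"] arg_cong[OF assms, of "\<lambda>v. v$Hi"] by simp_all

lemma column_entry: "(A *v axis j 1) $ i = (A $ i $ j :: real)"
  by (simp add: matrix_vector_mult_entry axis_def mult.commute cong: if_cong)

text \<open>A Lorentzian map fixing \<open>e_lo\<close> and \<open>e_hi\<close> preserves their orthogonal complement,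
  the spatial coordinates; so it is block diagonal and commutes with the diagonal \<open>a(t)\<close>.\<close>

lemma lorentzian_fixing_e_commutes_aa:
  fixes m :: "('d::finite) mat"
  assumes m: "lorentzian m" and lo: "m *v e_lo = e_lo" and hi: "m *v e_hi = e_hi"
  shows "m ** aa t = aa t ** m"
proof -
  have e_axis: "e_lo = axis Lo 1" "e_hi = axis Hi 1"
    by (rule lidx_vec_eqI; simp add: axis_def)+
  have col_lo: "m $ i $ Lo = e_lo $ i" and col_hi: "m $ i $ Hi = e_hi $ i" for i
    using column_entry[of m Lo i] column_entry[of m Hi i] lo hi by (simp_all add: e_axis)
  have row_hi: "m $ Hi $ Mid b = 0" and row_lo: "m $ Lo $ Mid b = 0" for b
  proof -
    have "m $ Hi $ Mid b = - lorentz_inner (m *v axis (Mid b) 1) (m *v e_lo)"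
      "m $ Lo $ Mid b = - lorentz_inner (m *v axis (Mid b) 1) (m *v e_hi)"
      using lo hi by (simp_all add: lorentz_inner_simps column_entry)
    then show "m $ Hi $ Mid b = 0" "m $ Lo $ Mid b = 0"
      using m by (simp_all add: lorentz_inner_matrix lorentz_inner_simps axis_def)
  qed
  show ?thesis
    by (rule lidx_mat_eqI) (simp_all add: matrix_mult_entry sum_UNIV_lidx col_lo col_hi row_lo row_hi)
qed

lemma Mgrp_iff:
  "m \<in> Mgrp \<longleftrightarrow> lorentzian m \<and> det m = 1 \<and> m *v e_lo = e_lo \<and> m *v e_hi = e_hi"
  for m :: "('d::finite) mat"
proof
  assume "m \<in> Mgrp"
  then have K: "lorentzian m" "det m = 1" "m *v basept = basept"
    and comm: "m ** aa 1 = aa 1 ** m" by (auto simp: Mgrp_def Kgrp_iff)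
  have "aa 1 *v (m *v e_lo) = exp 1 *\<^sub>R (m *v e_lo)"
    "aa 1 *v (m *v e_hi) = exp (-1) *\<^sub>R (m *v e_hi)"
    by (metis aa_e_lo aa_e_hi comm matrix_vector_mul_assoc matrix_vector_mult_scaleR)+
  then obtain c d where lo: "m *v e_lo = c *\<^sub>R e_lo" and hi: "m *v e_hi = d *\<^sub>R e_hi"
    using aa_eigenvector[of 1] by (metis zero_neq_one)
  have "c *\<^sub>R e_lo + d *\<^sub>R e_hi = (basept :: real^'d lidx)"
    using K(3) by (simp add: basept_eq matrix_vector_right_distrib lo hi)
  then have "c = 1" "d = 1" by (rule eq_basept_coords)+
  then show "lorentzian m \<and> det m = 1 \<and> m *v e_lo = e_lo \<and> m *v e_hi = e_hi"
    using K lo hi by simp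
next
  assume "lorentzian m \<and> det m = 1 \<and> m *v e_lo = e_lo \<and> m *v e_hi = e_hi"
  then show "m \<in> Mgrp"
    by (auto simp: Mgrp_def Kgrp_iff basept_eq matrix_vector_right_distrib
        intro: lorentzian_fixing_e_commutes_aa)
qed

lemma weyl_eltD:
  fixes \<sigma> :: "('d::finite) mat"
  assumes "weyl_elt \<sigma>"
  shows "lorentzian \<sigma>" "det \<sigma> = 1" "\<sigma> *v basept = basept" "\<sigma> ** \<sigma> = mat 1"
    "\<sigma> ** aa t = aa (-t) ** \<sigma>"
proof -
  have K: "\<sigma> \<in> Kgrp" and sq: "\<sigma> ** \<sigma> = mat 1"
    and conj: "\<sigma> ** aa t ** matrix_inv \<sigma> = aa (-t)"
    using assms by (auto simp: weyl_elt_def)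
  show "lorentzian \<sigma>" "det \<sigma> = 1" "\<sigma> *v basept = basept" "\<sigma> ** \<sigma> = mat 1"
    using K sq by (auto simp: Kgrp_iff)
  have "\<sigma> ** aa t = \<sigma> ** aa t ** (\<sigma> ** \<sigma>)" using sq by simp
  also have "\<dots> = aa (-t) ** \<sigma>"
    using conj matrix_inv_unique[OF sq sq] by (simp add: matrix_mul_assoc)
  finally show "\<sigma> ** aa t = aa (-t) ** \<sigma>" .
qed

lemma weyl_swaps_e:
  fixes \<sigma> :: "('d::finite) mat"
  assumes "weyl_elt \<sigma>"
  shows "\<sigma> *v e_lo = e_hi" "\<sigma> *v e_hi = e_lo"
proof -
  note comm = weyl_eltD(5)[OF assms, of 1]
  have "aa (-1) *v (\<sigma> *v e_lo) = exp (- (-1)) *\<^sub>R (\<sigma> *v e_lo)"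
    "aa (-1) *v (\<sigma> *v e_hi) = exp (-1) *\<^sub>R (\<sigma> *v e_hi)"
    by (simp_all add: matrix_vector_mul_assoc flip: comm)
      (simp_all add: matrix_vector_mult_scaleR flip: matrix_vector_mul_assoc)
  then obtain a b where lo: "\<sigma> *v e_lo = a *\<^sub>R e_hi" and hi: "\<sigma> *v e_hi = b *\<^sub>R e_lo"
    using aa_eigenvector[of "-1"] by (metis neg_equal_0_iff_equal zero_neq_one)
  have "b *\<^sub>R e_lo + a *\<^sub>R e_hi = (basept :: real^'d lidx)"
    using weyl_eltD(3)[OF assms] by (simp add: basept_eq matrix_vector_right_distrib lo hi add.commute)
  then have "b = 1" "a = 1" by (rule eq_basept_coords)+
  then show "\<sigma> *v e_lo = e_hi" "\<sigma> *v e_hi = e_lo" using lo hi by simp_all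
qed

lemma weyl_swap_coords:
  assumes "weyl_elt \<sigma>"
  shows "(\<sigma> *v w) $ Lo = w $ Hi" "(\<sigma> *v w) $ Hi = w $ Lo"
  using lorentz_inner_matrix[OF weyl_eltD(1)[OF assms], of w e_lo]
    lorentz_inner_matrix[OF weyl_eltD(1)[OF assms], of w e_hi]
  by (simp_all add: weyl_swaps_e[OF assms] lorentz_inner_simps)

lemma weyl_mult_Mgrp_Kgrp:
  assumes "weyl_elt \<sigma>" "m \<in> Mgrp"
  shows "\<sigma> ** m \<in> Kgrp"
  using assms weyl_eltD[OF assms(1)] weyl_swaps_e[OF assms(1)]
  by (auto simp: Kgrp_iff Mgrp_iff lorentzian_mult det_mul basept_eq matrix_vector_right_distrib
      add.commute simp flip: matrix_vector_mul_assoc)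

lemma null_vector_boundary_vec:
  assumes "lorentz_inner w w = 0" "0 < w$Hi"
  shows "w = w$Hi *\<^sub>R boundary_vec (inverse (w$Hi) *\<^sub>R spatial w)"
proof (rule lidx_vec_eqI)
  have "(norm (spatial w))^2 = 2 * w$Lo * w$Hi"
    using assms(1) by (simp add: lorentz_inner_simps)
  moreover have "(norm (inverse (w$Hi) *\<^sub>R spatial w))^2 = (norm (spatial w))^2 / (w$Hi)^2"
    by (simp add: power_mult_distrib power_inverse divide_inverse)
  ultimately show "w $ Lo = (w$Hi *\<^sub>R boundary_vec (inverse (w$Hi) *\<^sub>R spatial w)) $ Lo"
    using assms(2) by (simp add: power2_eq_square)
qed (use assms(2) in simp_all)

text \<open>\<open>h\<^sup>-\<^sup>1 e_hi\<close> is a null vector with \<open>Hi\<close>-coordinate \<open>e\<^sup>r\<close>, hence equal to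
  \<open>e\<^sup>r u(y) e_hi\<close>; then \<open>h u(y) a(-r)\<close> fixes \<open>e_lo\<close> and \<open>e_hi\<close>.\<close>

lemma lorentzian_e_lo_eigen_decomp:
  fixes h :: "('d::finite) mat"
  assumes h: "lorentzian h" "det h = 1" and e: "h *v e_lo = exp r *\<^sub>R e_lo"
  obtains m y where "m \<in> Mgrp" "h = m ** aa r ** uu y"
proof -
  define z where "z = matrix_inv h *v e_hi"
  have hz: "h *v z = e_hi"
    by (simp add: z_def matrix_vector_mul_assoc lorentzian_inverse(1)[OF h(1)])
  have zz: "lorentz_inner z z = 0" and z_hi: "z$Hi = exp r"
    using lorentz_inner_matrix[OF h(1), of z z] lorentz_inner_matrix[OF h(1), of z e_lo]
    by (simp_all add: hz e lorentz_inner_scaleR lorentz_inner_simps)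
  define y where "y = inverse (z$Hi) *\<^sub>R spatial z"
  have z_eq: "z = exp r *\<^sub>R boundary_vec y"
    using null_vector_boundary_vec[OF zz] z_hi by (simp add: y_def)
  define m where "m = h ** uu y ** aa (-r)"
  have "m *v e_lo = e_lo" "m *v e_hi = e_hi"
    using e hz z_eq
    by (simp_all add: m_def boundary_vec_def matrix_vector_mult_scaleR exp_minus
        flip: matrix_vector_mul_assoc)
  then have "m \<in> Mgrp"
    by (simp add: Mgrp_iff m_def h lorentzian_mult lorentzian_uu lorentzian_aa det_mul det_uu det_aa)
  moreover have "h = m ** aa r ** uu (-y)"
    by (simp add: m_def matrix_mul_assoc[symmetric] aa_inverse uu_inverse)
  ultimately show ?thesis by (rule that)
qed

lemma bruhat_of_e_lo:
  fixes g \<sigma> :: "('d::finite) mat"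
  assumes \<sigma>: "weyl_elt \<sigma>" and g: "lorentzian g" "det g = 1" and pos: "0 < (g *v e_lo)$Hi"
  shows "bruhat \<sigma> g (inverse ((g *v e_lo)$Hi) *\<^sub>R spatial (g *v e_lo)) (ln ((g *v e_lo)$Hi))"
proof -
  define w where "w = g *v e_lo"
  define x where "x = inverse (w$Hi) *\<^sub>R spatial w"
  define r where "r = ln (w$Hi)"
  have "lorentz_inner w w = 0"
    using lorentz_inner_matrix[OF g(1), of e_lo e_lo] by (simp add: w_def lorentz_inner_simps)
  then have w_eq: "w = exp r *\<^sub>R boundary_vec x"
    using null_vector_boundary_vec pos by (simp add: x_def r_def w_def)
  define h where "h = \<sigma> ** uu (-x) ** g"
  have "h *v e_lo = \<sigma> *v (uu (-x) *v w)"
    by (simp add: h_def w_def matrix_vector_mul_assoc matrix_mul_assoc)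
  also have "\<dots> = exp r *\<^sub>R (\<sigma> *v ((uu (-x) ** uu x) *v e_hi))"
    by (simp add: w_eq boundary_vec_def matrix_vector_mult_scaleR matrix_vector_mul_assoc)
  also have "\<dots> = exp r *\<^sub>R e_lo"
    by (simp add: uu_inverse weyl_swaps_e[OF \<sigma>])
  finally have "h *v e_lo = exp r *\<^sub>R e_lo" .
  moreover have "lorentzian h" "det h = 1"
    by (simp_all add: h_def lorentzian_mult lorentzian_uu g weyl_eltD[OF \<sigma>] det_mul det_uu)
  ultimately obtain m y where m: "m \<in> Mgrp" and h_eq: "h = m ** aa r ** uu y"
    using lorentzian_e_lo_eigen_decomp by blast
  have "uu x ** \<sigma> ** h = uu x ** (\<sigma> ** \<sigma>) ** uu (-x) ** g"
    by (simp add: h_def matrix_mul_assoc)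
  then have "g = uu x ** \<sigma> ** m ** aa r ** uu y"
    by (simp add: h_eq weyl_eltD[OF \<sigma>] uu_inverse matrix_mul_assoc)
  then show ?thesis using m by (auto simp: bruhat_def x_def r_def w_def)
qed

lemma Pgrp_e_lo_Hi: "g \<in> Pgrp \<Longrightarrow> (g *v e_lo) $ Hi = 0"
  by (auto simp: Pgrp_def Mgrp_iff matrix_vector_mult_scaleR simp flip: matrix_vector_mul_assoc)

lemma Kgrp_light_ray:
  assumes "k \<in> Kgrp" "k *v f = e_lo"
  shows "lorentz_inner f f = 0" "f$Lo + f$Hi = 1"
  using lorentz_inner_matrix[of k f f] lorentz_inner_matrix[of k f basept] assms
  by (auto simp: Kgrp_iff lorentz_inner_simps)

lemma null_vector_section_nonneg:
  assumes "lorentz_inner f f = 0" "f$Lo + f$Hi = 1"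
  shows "0 \<le> f$Lo" "0 \<le> f$Hi"
proof -
  have "2 * (f$Lo * f$Hi) = (norm (spatial f))^2"
    using assms(1) by (simp add: lorentz_inner_simps)
  then have "0 \<le> f$Lo * f$Hi"
    by (metis zero_le_power2 mult_le_cancel_left_pos zero_less_numeral mult_zero_right)
  then show "0 \<le> f$Lo" "0 \<le> f$Hi"
    using assms(2) by (auto simp: zero_le_mult_iff)
qed

lemma null_vector_section_Lo_0:
  assumes "lorentz_inner f f = 0" "f$Lo + f$Hi = 1" "f$Lo = 0"
  shows "f = e_hi"
proof (rule lidx_vec_eqI)
  have "spatial f = 0" using assms by (simp add: lorentz_inner_simps)
  then show "f $ Mid b = e_hi $ Mid b" for b by (simp add: vec_eq_iff)
qed (use assms in simp_all)

lemma null_vector_spatial_norm: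
  assumes "lorentz_inner y y = 0" "0 < y$Hi"
  shows "(norm (inverse (y$Hi) *\<^sub>R spatial y))^2 = 2 * y$Lo / y$Hi"
  using assms by (simp add: lorentz_inner_simps power_mult_distrib power2_eq_square field_simps)

lemma uu_weyl_aa_SOn1:
  assumes "weyl_elt \<sigma>"
  shows "uu p ** \<sigma> ** aa \<tau> \<in> SOn1"
proof -
  have "(uu p ** \<sigma> ** aa \<tau>) *v basept = uu p *v (exp \<tau> *\<^sub>R e_hi + exp (-\<tau>) *\<^sub>R e_lo)"
    by (simp add: basept_eq matrix_vector_right_distrib matrix_vector_mult_scaleR
        weyl_swaps_e[OF assms] flip: matrix_vector_mul_assoc)
  then have "((uu p ** \<sigma> ** aa \<tau>) *v basept) $ Lo = exp \<tau> * ((norm p)^2/2) + exp (-\<tau>)"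
    by (simp add: inner_vec_def)
  also have "\<dots> > 0" by (intro add_nonneg_pos) auto
  finally show ?thesis
    by (simp add: SOn1_iff lorentzian_mult lorentzian_uu lorentzian_aa weyl_eltD[OF assms]
        det_mul det_uu det_aa)
qed

section \<open>Cusps near a boundary point\<close>

locale cusp_data =
  fixes \<Gamma> \<Xi> \<eta> :: "('d::finite) mat set" and s0 s1 :: real and \<sigma> :: "'d mat"
  assumes weyl: "weyl_elt \<sigma>"
    and subgroup: "is_subgroup \<Gamma>"
    and one_Xi: "mat 1 \<in> \<Xi>" and Xi_SOn1: "\<Xi> \<subseteq> SOn1"
    and eta_Ngrp: "\<eta> \<subseteq> Ngrp" and one_eta: "mat 1 \<in> \<eta>"
    and s0_pos: "0 < s0"
    and siegel_cover: "SOn1 \<subseteq> {\<gamma> ** \<xi> ** w | \<gamma> \<xi> w. \<gamma> \<in> \<Gamma> \<and> \<xi> \<in> \<Xi> \<and> w \<in> Omega \<eta> s0}"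
    and siegel_separation: "\<forall>\<gamma>\<in>\<Gamma>. \<forall>\<xi>1\<in>\<Xi>. \<forall>\<xi>2\<in>\<Xi>.
       lmul (\<gamma> ** \<xi>1) (Omega \<eta> s0) \<inter> lmul \<xi>2 (Omega \<eta> s1) \<noteq> {} \<longrightarrow>
       \<xi>1 = \<xi>2 \<and> \<gamma> \<in> conjset \<xi>1 {n ** m | n m. n \<in> Ngrp \<and> m \<in> Mgrp}"
    and N_translates: "\<forall>\<xi>\<in>\<Xi>. \<forall>y. \<exists>\<gamma>\<in>\<Gamma>. \<exists>n\<in>\<eta>. \<gamma> ** \<xi> ** n = \<xi> ** uu y"
begin

lemma Gamma_mult: "\<gamma> \<in> \<Gamma> \<Longrightarrow> \<gamma>' \<in> \<Gamma> \<Longrightarrow> \<gamma> ** \<gamma>' \<in> \<Gamma>"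
  and Gamma_matrix_inv: "\<gamma> \<in> \<Gamma> \<Longrightarrow> matrix_inv \<gamma> \<in> \<Gamma>"
  and Gamma_SOn1: "\<gamma> \<in> \<Gamma> \<Longrightarrow> \<gamma> \<in> SOn1"
  using subgroup by (auto simp: is_subgroup_def)

lemma Gamma_Xi_lorentzian:
  assumes "\<gamma> \<in> \<Gamma>" "\<xi> \<in> \<Xi>"
  shows "lorentzian (\<gamma> ** \<xi>)" "det (\<gamma> ** \<xi>) = 1"
  using Gamma_SOn1[OF assms(1)] assms(2) Xi_SOn1
  by (auto simp: SOn1_iff lorentzian_mult det_mul)

lemma eta_uu: "n \<in> \<eta> \<Longrightarrow> \<exists>z. n = uu z"
  using eta_Ngrp by (auto simp: Ngrp_def)

lemma separation_fixes_infinity: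
  assumes \<gamma>: "\<gamma> \<in> \<Gamma>" and \<xi>: "\<xi> \<in> \<Xi>" and n: "n \<in> \<eta>" "n' \<in> \<eta>"
    and t: "s0 \<le> t" "s1 \<le> t'" and k: "k \<in> Kgrp"
    and eq: "\<gamma> ** \<xi> ** n ** aa t = n' ** aa t' ** k"
  shows "\<xi> = mat 1" "\<gamma> *v e_lo = e_lo"
proof -
  have "\<gamma> ** \<xi> ** (n ** aa t ** mat 1) \<in> lmul (\<gamma> ** \<xi>) (Omega \<eta> s0)"
    using n t mat_1_Kgrp unfolding lmul_def Omega_def by blast
  moreover have "\<gamma> ** \<xi> ** (n ** aa t ** mat 1) = mat 1 ** (n' ** aa t' ** k)"
    using eq by (simp add: matrix_mul_assoc)
  then have "\<gamma> ** \<xi> ** (n ** aa t ** mat 1) \<in> lmul (mat 1) (Omega \<eta> s1)"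
    using n t k unfolding lmul_def Omega_def by blast
  ultimately have "\<xi> = mat 1 \<and> \<gamma> \<in> conjset \<xi> {n ** m | n m. n \<in> Ngrp \<and> m \<in> Mgrp}"
    using siegel_separation \<gamma> \<xi> one_Xi by blast
  moreover have "matrix_inv (mat 1 :: 'd mat) = mat 1"
    by (simp add: matrix_inv_unique)
  ultimately obtain z m where "\<xi> = mat 1" "m \<in> Mgrp" "\<gamma> = uu z ** m"
    by (auto simp: conjset_def Ngrp_def)
  then show "\<xi> = mat 1" "\<gamma> *v e_lo = e_lo"
    by (simp_all add: Mgrp_iff flip: matrix_vector_mul_assoc)
qed

lemma absorb_uu_right:
  assumes \<gamma>: "\<gamma> \<in> \<Gamma>" and \<xi>: "\<xi> \<in> \<Xi>" and eq: "\<gamma> ** \<xi> = h ** uu y"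
  obtains \<gamma>' n where "\<gamma>' \<in> \<Gamma>" "n \<in> \<eta>" "\<gamma>' ** \<xi> ** n = h"
proof -
  obtain \<gamma>1 n where \<gamma>1: "\<gamma>1 \<in> \<Gamma>" and n: "n \<in> \<eta>" and eq1: "\<gamma>1 ** \<xi> ** n = \<xi> ** uu (-y)"
    using N_translates \<xi> by blast
  have "\<gamma> ** \<gamma>1 ** \<xi> ** n = \<gamma> ** (\<gamma>1 ** \<xi> ** n)"
    by (simp add: matrix_mul_assoc)
  also have "\<dots> = \<gamma> ** \<xi> ** uu (-y)"
    by (simp add: eq1 matrix_mul_assoc)
  also have "\<dots> = h" by (simp add: eq uu_inverse flip: matrix_mul_assoc)
  finally show ?thesis using that Gamma_mult[OF \<gamma> \<gamma>1] n by blast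
qed

lemma absorb_uu_left:
  obtains \<gamma> c where "\<gamma> \<in> \<Gamma>" "c \<in> \<eta>" "uu x = \<gamma> ** c"
  using N_translates one_Xi by (metis matrix_mul_lid matrix_mul_rid)

lemma fixing_infinity_no_dilation:
  assumes \<gamma>: "\<gamma> \<in> \<Gamma>" and \<xi>: "\<xi> \<in> \<Xi>" and e: "(\<gamma> ** \<xi>) *v e_lo = exp r *\<^sub>R e_lo"
  shows "r = 0"
proof -
  obtain m y where m: "m \<in> Mgrp" and eq: "\<gamma> ** \<xi> = m ** aa r ** uu y"
    using lorentzian_e_lo_eigen_decomp Gamma_Xi_lorentzian[OF \<gamma> \<xi>] e by metis
  obtain \<gamma>' n where \<gamma>': "\<gamma>' \<in> \<Gamma>" and n: "n \<in> \<eta>" and eq': "\<gamma>' ** \<xi> ** n = m ** aa r"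
    using absorb_uu_right[OF \<gamma> \<xi> eq] .
  define t where "t = max s0 (s1 - r)"
  have "\<gamma>' ** \<xi> ** n ** aa t = m ** aa (r + t)"
    unfolding eq' by (simp add: aa_mult flip: matrix_mul_assoc)
  also have "\<dots> = mat 1 ** aa (r + t) ** m"
    using m by (simp add: Mgrp_def)
  finally have eq'': "\<gamma>' ** \<xi> ** n ** aa t = mat 1 ** aa (r + t) ** m" .
  have "m \<in> Kgrp" using m by (simp add: Mgrp_def)
  then have "\<xi> = mat 1" "\<gamma>' *v e_lo = e_lo"
    using separation_fixes_infinity[OF \<gamma>' \<xi> n one_eta _ _ _ eq''] by (simp_all add: t_def)
  moreover obtain z where "n = uu z" using eta_uu n by metis
  ultimately have "exp t = exp (r + t)"
    using arg_cong[OF eq'', of "\<lambda>g. (g *v e_lo) $ Lo"] m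
    by (simp add: Mgrp_iff matrix_vector_mult_scaleR flip: matrix_vector_mul_assoc)
  then show "r = 0" by simp
qed

text \<open>A cusp of height at most \<open>e\<^sup>-\<^sup>s\<^sup>0\<^sup>-\<^sup>s\<^sup>1\<close> would, after absorbing its \<open>N\<close>-parts into \<open>\<eta>\<close>, exhibit
  a translate \<open>\<gamma>'\<xi>\<Omega>(\<eta>,s0)\<close> meeting \<open>\<Omega>(\<eta>,s1)\<close>; separation then forces \<open>\<gamma>'\<close> to fix \<open>\<infinity>\<close>,
  which the Weyl element in the Bruhat form forbids.\<close>

lemma cusp_height_lower_bound:
  assumes \<gamma>: "\<gamma> \<in> \<Gamma>" and \<xi>: "\<xi> \<in> \<Xi>" and b: "bruhat \<sigma> (\<gamma> ** \<xi>) x r"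
  shows "- s0 - s1 < r"
proof (rule ccontr)
  assume "\<not> - s0 - s1 < r"
  then have r: "s1 \<le> - (r + s0)" by simp
  obtain m y where m: "m \<in> Mgrp" and eq: "\<gamma> ** \<xi> = uu x ** \<sigma> ** m ** aa r ** uu y"
    using b by (auto simp: bruhat_def)
  obtain \<gamma>0 c where \<gamma>0: "\<gamma>0 \<in> \<Gamma>" and c: "c \<in> \<eta>" and x: "uu x = \<gamma>0 ** c"
    using absorb_uu_left .
  obtain \<gamma>' n where \<gamma>': "\<gamma>' \<in> \<Gamma>" and n: "n \<in> \<eta>"
    and eq': "\<gamma>' ** \<xi> ** n = uu x ** \<sigma> ** m ** aa r"
    using absorb_uu_right[OF \<gamma> \<xi> eq] .
  define \<gamma>2 where "\<gamma>2 = matrix_inv \<gamma>0 ** \<gamma>'"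
  have \<gamma>2: "\<gamma>2 \<in> \<Gamma>" by (simp add: \<gamma>2_def Gamma_mult Gamma_matrix_inv \<gamma>0 \<gamma>')
  have inv: "matrix_inv \<gamma>0 ** \<gamma>0 = mat 1"
    using Gamma_SOn1[OF \<gamma>0] by (simp add: SOn1_iff lorentzian_inverse)
  have "\<gamma>2 ** \<xi> ** n ** aa s0 = matrix_inv \<gamma>0 ** (\<gamma>' ** \<xi> ** n) ** aa s0"
    by (simp add: \<gamma>2_def matrix_mul_assoc)
  also have "\<dots> = (matrix_inv \<gamma>0 ** \<gamma>0) ** c ** \<sigma> ** (m ** aa (r + s0))"
    unfolding eq' x by (simp add: aa_mult flip: matrix_mul_assoc)
  also have "\<dots> = (matrix_inv \<gamma>0 ** \<gamma>0) ** c ** (\<sigma> ** aa (r + s0)) ** m"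
    using m by (simp add: Mgrp_def matrix_mul_assoc)
  also have "\<dots> = c ** aa (- (r + s0)) ** (\<sigma> ** m)"
    by (simp add: inv weyl_eltD(5)[OF weyl] matrix_mul_assoc)
  finally have eq'': "\<gamma>2 ** \<xi> ** n ** aa s0 = c ** aa (- (r + s0)) ** (\<sigma> ** m)" .
  then have "\<xi> = mat 1" "\<gamma>2 *v e_lo = e_lo"
    using separation_fixes_infinity[OF \<gamma>2 \<xi> n c order_refl r weyl_mult_Mgrp_Kgrp[OF weyl m]]
    by simp_all
  moreover obtain z z' where "n = uu z" "c = uu z'" using eta_uu n c by metis
  ultimately have "0 = exp (r + s0)"
    using arg_cong[OF eq'', of "\<lambda>g. (g *v e_lo) $ Hi"] m
    by (simp add: Mgrp_iff weyl_swaps_e[OF weyl] matrix_vector_mult_scaleR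
        flip: matrix_vector_mul_assoc)
  then show False by simp
qed

lemma siegel_light_ray:
  assumes "g \<in> SOn1"
  obtains \<gamma> \<xi> s f where "\<gamma> \<in> \<Gamma>" "\<xi> \<in> \<Xi>" "s0 \<le> s"
    "lorentz_inner f f = 0" "f$Lo + f$Hi = 1" "g *v f = exp s *\<^sub>R ((\<gamma> ** \<xi>) *v e_lo)"
proof -
  obtain \<gamma> \<xi> n s k where \<gamma>: "\<gamma> \<in> \<Gamma>" and \<xi>: "\<xi> \<in> \<Xi>" and n: "n \<in> \<eta>" and s: "s0 \<le> s"
    and k: "k \<in> Kgrp" and g: "g = \<gamma> ** \<xi> ** (n ** aa s ** k)"
    using siegel_cover assms unfolding Omega_def by blast
  define f where "f = matrix_inv k *v e_lo"
  have kf: "k *v f = e_lo"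
    using k by (simp add: f_def matrix_vector_mul_assoc Kgrp_iff lorentzian_inverse)
  obtain z where "n = uu z" using eta_uu n by metis
  then have "g *v f = exp s *\<^sub>R ((\<gamma> ** \<xi>) *v e_lo)"
    by (simp add: g kf matrix_vector_mult_scaleR flip: matrix_vector_mul_assoc)
  then show ?thesis using that \<gamma> \<xi> s Kgrp_light_ray[OF k kf] by blast
qed

lemma cusp_of_null_vector:
  assumes \<gamma>: "\<gamma> \<in> \<Gamma>" and \<xi>: "\<xi> \<in> \<Xi>" and v: "(\<gamma> ** \<xi>) *v e_lo = uu p *v y"
    and yy: "lorentz_inner y y = 0" and y_pos: "0 < y$Hi"
  shows "\<gamma> ** \<xi> \<notin> Pgrp" "bruhat \<sigma> (\<gamma> ** \<xi>) (p + inverse (y$Hi) *\<^sub>R spatial y) (ln (y$Hi))"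
    "(dist (p + inverse (y$Hi) *\<^sub>R spatial y) p)^2 \<le> 2 * exp (s0 + s1) * y$Lo"
proof -
  show "\<gamma> ** \<xi> \<notin> Pgrp" using Pgrp_e_lo_Hi y_pos v by force
  show b: "bruhat \<sigma> (\<gamma> ** \<xi>) (p + inverse (y$Hi) *\<^sub>R spatial y) (ln (y$Hi))"
    using bruhat_of_e_lo[OF weyl Gamma_Xi_lorentzian[OF \<gamma> \<xi>]] y_pos
    by (simp add: v spatial_uu_mult_vec algebra_simps)
  have "exp (- s0 - s1) < y$Hi"
    using cusp_height_lower_bound[OF \<gamma> \<xi> b] y_pos by (metis exp_less_cancel_iff exp_ln)
  then have "inverse (y$Hi) \<le> inverse (exp (- (s0 + s1)))"
    by (intro le_imp_inverse_le) auto
  then have "inverse (y$Hi) \<le> exp (s0 + s1)"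
    by (simp add: exp_diff exp_minus exp_add divide_inverse)
  moreover have "0 \<le> y$Lo"
  proof -
    have "(norm (spatial y))^2 = (2 * y$Lo) * y$Hi"
      using yy by (simp add: lorentz_inner_simps)
    then have "0 \<le> (2 * y$Lo) * y$Hi" by (metis zero_le_power2)
    then show ?thesis using y_pos by (simp add: zero_le_mult_iff)
  qed
  ultimately have "2 * y$Lo / y$Hi \<le> 2 * exp (s0 + s1) * y$Lo"
    by (simp add: divide_inverse mult_left_mono mult.commute mult.left_commute)
  then show "(dist (p + inverse (y$Hi) *\<^sub>R spatial y) p)^2 \<le> 2 * exp (s0 + s1) * y$Lo"
    using null_vector_spatial_norm[OF yy y_pos] by (simp add: dist_norm)
qed

lemma cusp_in_ball:
  fixes p :: "real^'d"
  assumes X: "1 \<le> X"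
  shows "\<exists>\<gamma>\<in>\<Gamma>. \<exists>\<xi>\<in>\<Xi>. \<gamma> ** \<xi> \<notin> Pgrp \<and> (\<exists>x r. bruhat \<sigma> (\<gamma> ** \<xi>) x r
           \<and> x \<in> cball p (sqrt (2 * exp (s1 - s0)) / sqrt X) \<and> exp r \<le> X)"
proof -
  define \<tau> where "\<tau> = ln X + s0"
  have exp_\<tau>: "exp \<tau> = X * exp s0" using X by (simp add: \<tau>_def exp_add)
  obtain \<gamma> \<xi> s f where \<gamma>: "\<gamma> \<in> \<Gamma>" and \<xi>: "\<xi> \<in> \<Xi>" and s: "s0 \<le> s"
    and ff: "lorentz_inner f f = 0" and f1: "f$Lo + f$Hi = 1"
    and gf: "(uu p ** \<sigma> ** aa \<tau>) *v f = exp s *\<^sub>R ((\<gamma> ** \<xi>) *v e_lo)"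
    using siegel_light_ray[OF uu_weyl_aa_SOn1[OF weyl]] .
  note f_nonneg = null_vector_section_nonneg[OF ff f1]
  define y where "y = exp (-s) *\<^sub>R (\<sigma> *v (aa \<tau> *v f))"
  have v: "(\<gamma> ** \<xi>) *v e_lo = uu p *v y"
    using arg_cong[OF gf, of "scaleR (exp (-s))"]
    by (simp add: y_def matrix_vector_mult_scaleR exp_minus flip: matrix_vector_mul_assoc)
  have y_Hi: "y$Hi = exp (\<tau> - s) * f$Lo" and y_Lo: "y$Lo = exp (- \<tau> - s) * f$Hi"
    by (simp_all add: y_def weyl_swap_coords[OF weyl] exp_diff exp_minus field_simps)
  have yy: "lorentz_inner y y = 0"
    using ff by (simp add: y_def lorentz_inner_scaleR lorentz_inner_matrix weyl_eltD[OF weyl]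
        lorentzian_aa)
  have "0 < f$Lo"
  proof (rule ccontr)
    assume "\<not> 0 < f$Lo"
    then have "f = e_hi" using f_nonneg ff f1 null_vector_section_Lo_0 by force
    then have "(\<gamma> ** \<xi>) *v e_lo = exp (- (s + \<tau>)) *\<^sub>R e_lo"
      using v by (simp add: y_def weyl_swaps_e[OF weyl] matrix_vector_mult_scaleR exp_diff
          exp_minus divide_inverse)
    then have "- (s + \<tau>) = 0" by (rule fixing_infinity_no_dilation[OF \<gamma> \<xi>])
    then show False using s s0_pos ln_ge_zero[OF X] by (simp add: \<tau>_def)
  qed
  then have y_pos: "0 < y$Hi" by (simp add: y_Hi)
  define x where "x = p + inverse (y$Hi) *\<^sub>R spatial y"
  have "exp (\<tau> - s) * f$Lo \<le> exp (\<tau> - s0) * 1"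
    by (rule mult_mono) (use s f_nonneg f1 in auto)
  then have "exp (ln (y$Hi)) \<le> X" using y_pos by (simp add: y_Hi exp_diff exp_\<tau>)
  have "exp (- \<tau> - s) * f$Hi \<le> exp (- \<tau> - s0) * 1"
    by (rule mult_mono) (use s f_nonneg f1 in auto)
  then have "(dist x p)^2 \<le> 2 * exp (s0 + s1) * exp (- \<tau> - s0)"
    using cusp_of_null_vector(3)[OF \<gamma> \<xi> v yy y_pos] unfolding x_def y_Lo
    by (smt (verit) exp_gt_zero mult_left_mono)
  also have "\<dots> = 2 * exp (s1 - s0) / X"
    using X by (simp add: exp_\<tau> exp_diff exp_minus exp_add field_simps)
  finally have "dist p x \<le> sqrt (2 * exp (s1 - s0) / X)"
    by (simp add: dist_commute real_le_rsqrt)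
  then have "dist p x \<le> sqrt (2 * exp (s1 - s0)) / sqrt X"
    by (simp add: real_sqrt_divide)
  then show ?thesis
    using \<gamma> \<xi> cusp_of_null_vector(1,2)[OF \<gamma> \<xi> v yy y_pos] \<open>exp (ln (y$Hi)) \<le> X\<close>
    by (auto simp: x_def)
qed

end

lemma conjset_Ngrp_conj_back:
  assumes "\<xi> \<in> SOn1" "c \<in> conjset \<xi> Ngrp"
  shows "matrix_inv \<xi> ** c ** \<xi> \<in> Ngrp"
proof -
  obtain z where c: "c = \<xi> ** uu z ** matrix_inv \<xi>"
    using assms(2) by (auto simp: conjset_def Ngrp_def)
  have inv: "matrix_inv \<xi> ** \<xi> = mat 1"
    using assms(1) by (simp add: SOn1_iff lorentzian_inverse)
  have "matrix_inv \<xi> ** c ** \<xi> = (matrix_inv \<xi> ** \<xi>) ** uu z ** (matrix_inv \<xi> ** \<xi>)"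
    by (simp add: c matrix_mul_assoc)
  then show ?thesis by (simp add: inv Ngrp_def)
qed

lemma conjset_Ngrp_translate:
  assumes "\<xi> \<in> SOn1"
    and cover: "conjset \<xi> Ngrp \<subseteq> {\<gamma> ** c | \<gamma> c. \<gamma> \<in> \<Gamma> \<inter> conjset \<xi> Ngrp \<and> c \<in> C}"
  shows "\<exists>\<gamma>\<in>\<Gamma>. \<exists>n\<in>(\<lambda>c. matrix_inv \<xi> ** c ** \<xi>) ` C. \<gamma> ** \<xi> ** n = \<xi> ** uu y"
proof -
  have "\<xi> ** uu y ** matrix_inv \<xi> \<in> conjset \<xi> Ngrp" by (auto simp: conjset_def Ngrp_def)
  then obtain \<gamma> c where \<gamma>: "\<gamma> \<in> \<Gamma>" and c: "c \<in> C" and e: "\<xi> ** uu y ** matrix_inv \<xi> = \<gamma> ** c"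
    using cover by blast
  have inv: "\<xi> ** matrix_inv \<xi> = mat 1" "matrix_inv \<xi> ** \<xi> = mat 1"
    using assms(1) by (simp_all add: SOn1_iff lorentzian_inverse)
  have "\<gamma> ** \<xi> ** (matrix_inv \<xi> ** c ** \<xi>) = \<gamma> ** (\<xi> ** matrix_inv \<xi>) ** c ** \<xi>"
    by (simp add: matrix_mul_assoc)
  also have "\<dots> = \<gamma> ** c ** \<xi>"
    by (simp add: inv)
  also have "\<dots> = \<xi> ** uu y ** (matrix_inv \<xi> ** \<xi>)"
    unfolding e[symmetric] by (simp add: matrix_mul_assoc)
  finally show ?thesis using \<gamma> c by (auto simp: inv)
qed

lemma Omega_mono: "\<eta> \<subseteq> \<eta>' \<Longrightarrow> Omega \<eta> s \<subseteq> Omega \<eta>' s"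
  by (auto simp: Omega_def)

text \<open>The Siegel domain is enlarged by conjugated compact fundamental domains of the cusp
  stabilisers, so that every \<open>\<xi> u(y)\<close> becomes a \<open>\<Gamma>\<close>-translate of a point of \<open>\<xi> \<eta>\<close>.\<close>

lemma cusp_data_exists:
  fixes \<Gamma> \<Xi> \<eta>0 :: "('d::finite) mat set"
  assumes "weyl_elt \<sigma>" "is_subgroup \<Gamma>" "0 < s0" and eta0: "compact \<eta>0" "\<eta>0 \<subseteq> Ngrp"
    and Xi: "finite \<Xi>" "mat 1 \<in> \<Xi>" "\<Xi> \<subseteq> SOn1"
    and cond_i: "SOn1 = {\<gamma> ** \<xi> ** w | \<gamma> \<xi> w. \<gamma> \<in> \<Gamma> \<and> \<xi> \<in> \<Xi> \<and> w \<in> Omega \<eta>0 s0}"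
    and cond_ii: "\<forall>\<xi>\<in>\<Xi>. \<exists>C. compact C \<and> C \<subseteq> conjset \<xi> Ngrp \<and>
                    conjset \<xi> Ngrp \<subseteq> {\<gamma> ** c | \<gamma> c. \<gamma> \<in> \<Gamma> \<inter> conjset \<xi> Ngrp \<and> c \<in> C}"
    and cond_iv: "\<forall>\<eta>. compact \<eta> \<and> \<eta>0 \<subseteq> \<eta> \<and> \<eta> \<subseteq> Ngrp \<longrightarrow>
                    (\<exists>s1 > s0. \<forall>\<gamma>\<in>\<Gamma>. \<forall>\<xi>1\<in>\<Xi>. \<forall>\<xi>2\<in>\<Xi>.
                       lmul (\<gamma> ** \<xi>1) (Omega \<eta> s0) \<inter> lmul \<xi>2 (Omega \<eta> s1) \<noteq> {} \<longrightarrow>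
                       \<xi>1 = \<xi>2 \<and> \<gamma> \<in> conjset \<xi>1 {n ** m | n m. n \<in> Ngrp \<and> m \<in> Mgrp})"
  shows "\<exists>\<eta> s1. cusp_data \<Gamma> \<Xi> \<eta> s0 s1 \<sigma>"
proof -
  obtain C where C: "\<forall>\<xi>\<in>\<Xi>. compact (C \<xi>) \<and> C \<xi> \<subseteq> conjset \<xi> Ngrp \<and>
      conjset \<xi> Ngrp \<subseteq> {\<gamma> ** c | \<gamma> c. \<gamma> \<in> \<Gamma> \<inter> conjset \<xi> Ngrp \<and> c \<in> C \<xi>}"
    using bchoice[OF cond_ii] by blast
  define \<eta> where "\<eta> = \<eta>0 \<union> {mat 1} \<union> (\<Union>\<xi>\<in>\<Xi>. (\<lambda>c. matrix_inv \<xi> ** c ** \<xi>) ` C \<xi>)"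
  have "continuous_on (C \<xi>) (\<lambda>c. matrix_inv \<xi> ** c ** \<xi>)" for \<xi>
    unfolding matrix_matrix_mult_def by (intro continuous_intros)
  then have "compact \<eta>"
    unfolding \<eta>_def using C Xi(1) eta0(1)
    by (intro compact_Un compact_UN compact_continuous_image compact_sing) auto
  moreover have "\<eta> \<subseteq> Ngrp"
  proof -
    have "mat 1 \<in> Ngrp" by (metis Ngrp_def rangeI uu_0)
    moreover have "matrix_inv \<xi> ** c ** \<xi> \<in> Ngrp" if "\<xi> \<in> \<Xi>" "c \<in> C \<xi>" for \<xi> c
      using that C Xi(3) conjset_Ngrp_conj_back by blast
    ultimately show ?thesis using eta0(2) by (auto simp: \<eta>_def)
  qed
  moreover have "\<eta>0 \<subseteq> \<eta>" by (auto simp: \<eta>_def)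
  ultimately have "compact \<eta> \<and> \<eta>0 \<subseteq> \<eta> \<and> \<eta> \<subseteq> Ngrp" by blast
  then obtain s1 where separation: "\<forall>\<gamma>\<in>\<Gamma>. \<forall>\<xi>1\<in>\<Xi>. \<forall>\<xi>2\<in>\<Xi>.
       lmul (\<gamma> ** \<xi>1) (Omega \<eta> s0) \<inter> lmul \<xi>2 (Omega \<eta> s1) \<noteq> {} \<longrightarrow>
       \<xi>1 = \<xi>2 \<and> \<gamma> \<in> conjset \<xi>1 {n ** m | n m. n \<in> Ngrp \<and> m \<in> Mgrp}"
    using cond_iv by meson
  have "\<forall>\<xi>\<in>\<Xi>. \<forall>y. \<exists>\<gamma>\<in>\<Gamma>. \<exists>n\<in>\<eta>. \<gamma> ** \<xi> ** n = \<xi> ** uu y"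
  proof (intro ballI allI)
    fix \<xi> y assume "\<xi> \<in> \<Xi>"
    then show "\<exists>\<gamma>\<in>\<Gamma>. \<exists>n\<in>\<eta>. \<gamma> ** \<xi> ** n = \<xi> ** uu y"
      using conjset_Ngrp_translate[of \<xi> \<Gamma> "C \<xi>" y] C Xi(3) unfolding \<eta>_def by blast
  qed
  moreover have "SOn1 \<subseteq> {\<gamma> ** \<xi> ** w | \<gamma> \<xi> w. \<gamma> \<in> \<Gamma> \<and> \<xi> \<in> \<Xi> \<and> w \<in> Omega \<eta> s0}"
    unfolding cond_i using Omega_mono[OF \<open>\<eta>0 \<subseteq> \<eta>\<close>] by blast
  moreover have "mat 1 \<in> \<eta>" by (simp add: \<eta>_def)
  ultimately have "cusp_data \<Gamma> \<Xi> \<eta> s0 s1 \<sigma>"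
    using assms(1-3) Xi(2,3) \<open>\<eta> \<subseteq> Ngrp\<close> separation by (intro cusp_data.intro) blast+
  then show ?thesis by blast
qed

theorem lemma5p2:
  fixes \<Gamma> \<Xi> \<eta>0 :: "('d::finite) mat set" and s0 :: real and \<sigma> :: "'d mat"
  assumes sigma: "weyl_elt \<sigma>"
    and subgrp: "is_subgroup \<Gamma>" and discr: "discrete_set \<Gamma>"
    and finvol: "finite_covolume \<Gamma>" and noncpt: "noncocompact \<Gamma>"
    and s0: "s0 > 0" and eta0: "compact \<eta>0" "\<eta>0 \<subseteq> Ngrp"
    and Xi: "finite \<Xi>" "mat 1 \<in> \<Xi>" "\<Xi> \<subseteq> SOn1"
    and cond_i: "SOn1 = {\<gamma> ** \<xi> ** w | \<gamma> \<xi> w. \<gamma> \<in> \<Gamma> \<and> \<xi> \<in> \<Xi> \<and> w \<in> Omega \<eta>0 s0}"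
    and cond_ii: "\<forall>\<xi>\<in>\<Xi>. \<exists>C. compact C \<and> C \<subseteq> conjset \<xi> Ngrp \<and>
                    conjset \<xi> Ngrp \<subseteq> {\<gamma> ** c | \<gamma> c. \<gamma> \<in> \<Gamma> \<inter> conjset \<xi> Ngrp \<and> c \<in> C}"
    and cond_iii: "\<forall>\<eta>. compact \<eta> \<and> \<eta> \<subseteq> Ngrp \<longrightarrow>
                    finite {\<gamma> \<in> \<Gamma>. (\<Union>\<xi>\<in>\<Xi>. lmul (\<gamma> ** \<xi>) (Omega \<eta> s0)) \<inter> Omega \<eta> s0 \<noteq> {}}"
    and cond_iv: "\<forall>\<eta>. compact \<eta> \<and> \<eta>0 \<subseteq> \<eta> \<and> \<eta> \<subseteq> Ngrp \<longrightarrow>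
                    (\<exists>s1 > s0. \<forall>\<gamma>\<in>\<Gamma>. \<forall>\<xi>1\<in>\<Xi>. \<forall>\<xi>2\<in>\<Xi>.
                       lmul (\<gamma> ** \<xi>1) (Omega \<eta> s0) \<inter> lmul \<xi>2 (Omega \<eta> s1) \<noteq> {} \<longrightarrow>
                       \<xi>1 = \<xi>2 \<and> \<gamma> \<in> conjset \<xi>1 {n ** m | n m. n \<in> Ngrp \<and> m \<in> Mgrp})"
  shows "\<exists>c > 0. \<forall>\<^sub>F X in at_top. \<forall>p :: real^'d.
           \<exists>\<gamma>\<in>\<Gamma>. \<exists>\<xi>\<in>\<Xi>. \<gamma> ** \<xi> \<notin> Pgrp \<and>
             (\<exists>x r. bruhat \<sigma> (\<gamma> ** \<xi>) x r \<and> x \<in> cball p (c / sqrt X) \<and> exp r \<le> X)"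
proof -
  obtain \<eta> s1 where "cusp_data \<Gamma> \<Xi> \<eta> s0 s1 \<sigma>"
    using cusp_data_exists[OF sigma subgrp s0 eta0 Xi cond_i cond_ii cond_iv] by blast
  then interpret cusp_data \<Gamma> \<Xi> \<eta> s0 s1 \<sigma> .
  have "\<forall>\<^sub>F X in at_top. \<forall>p :: real^'d. \<exists>\<gamma>\<in>\<Gamma>. \<exists>\<xi>\<in>\<Xi>. \<gamma> ** \<xi> \<notin> Pgrp \<and>
      (\<exists>x r. bruhat \<sigma> (\<gamma> ** \<xi>) x r \<and> x \<in> cball p (sqrt (2 * exp (s1 - s0)) / sqrt X) \<and> exp r \<le> X)"
    using eventually_ge_at_top[of 1] by eventually_elim (use cusp_in_ball in blast)
  then show ?thesis by (intro exI[of _ "sqrt (2 * exp (s1 - s0))"]) simp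
qed

end
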